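(* Let $G$ be a finite group and $N\trianglelefteq G$. Then \[ \gamma^{\mathrm{s}}_{\mathrm{cp}}(G)\le\gamma^{\mathrm{ss}}_{\mathrm{cp}}(N)+\gamma^{\mathrm{s}}_{\mathrm{cp}}(G/N). \]
   Context: For $A\le G$, $\gamma^A_{\mathrm{cp}}(G)$ is the smallest $k$ such that $G=A_1\cdots A_k$ (setwise) with each $A_i$ conjugate to $A$ in $G$ ($\infty$ if none). $\gamma^{\mathrm{s}}_{\mathrm{cp}}(G):=\min\{\gamma^A_{\mathrm{cp}}(G): A\le G\text{ solvable}\}$. A factorization $G=A_1\cdots A_k$ by conjugates of $A$ is a special solvable cp-factorization if (i) $A$ is solvable, (ii) $N_G(A)=A$, and (iii) for every $\alpha\in\mathrm{Aut}(G)$ there is $g\in G$ with $A^\alpha=A^g$; $\gamma^{\mathrm{ss}}_{\mathrm{cp}}(G)$ is the minimal length of such a factorization. *)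

theory Defs
  imports "HOL-Algebra.Algebra" "HOL-Library.Extended_Nat"
begin

definition conjset :: "('a, 'b) monoid_scheme \<Rightarrow> 'a set \<Rightarrow> 'a \<Rightarrow> 'a set" where
  "conjset G A g = (g <#\<^bsub>G\<^esub> A) #>\<^bsub>G\<^esub> inv\<^bsub>G\<^esub> g"

fun setprod_list :: "('a, 'b) monoid_scheme \<Rightarrow> 'a set list \<Rightarrow> 'a set" where
  "setprod_list G [] = {\<one>\<^bsub>G\<^esub>}"
| "setprod_list G [A] = A"
| "setprod_list G (A # As) = A <#>\<^bsub>G\<^esub> setprod_list G As"

definition cp_fact :: "('a, 'b) monoid_scheme \<Rightarrow> 'a set \<Rightarrow> nat \<Rightarrow> bool" where
  "cp_fact G A k \<longleftrightarrow> k \<ge> 1 \<and> (\<exists>gs. length gs = k \<and> set gs \<subseteq> carrier G \<and>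
      setprod_list G (map (conjset G A) gs) = carrier G)"

text \<open>gamma^A_cp(G); infinity if no such factorization.\<close>
definition gamma_cp :: "('a, 'b) monoid_scheme \<Rightarrow> 'a set \<Rightarrow> enat" where
  "gamma_cp G A = Inf {enat k | k. cp_fact G A k}"

definition gamma_s :: "('a, 'b) monoid_scheme \<Rightarrow> enat" where
  "gamma_s G = Inf {gamma_cp G A | A. subgroup A G \<and> solvable (G\<lparr>carrier := A\<rparr>)}"

definition special_sub :: "('a, 'b) monoid_scheme \<Rightarrow> 'a set \<Rightarrow> bool" where
  "special_sub G A \<longleftrightarrow> subgroup A G \<and> solvable (G\<lparr>carrier := A\<rparr>) \<and>
     normalizer G A = A \<and>
     (\<forall>\<alpha> \<in> iso G G. \<exists>g \<in> carrier G. \<alpha> ` A = conjset G A g)"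

definition gamma_ss :: "('a, 'b) monoid_scheme \<Rightarrow> enat" where
  "gamma_ss G = Inf {gamma_cp G A | A. special_sub G A}"

end

theory Submission
  imports Defs
begin

text \<open>
  Let A be a special subgroup of N with N = A^n1 \<cdots> A^nk, and B a solvable subgroup of G/N with
  G/N = B^h1 \<cdots> B^hm. Conjugation by any element of G restricts to an automorphism of N, so
  specialness moves A only within its N-conjugacy class, and the Frattini argument gives
  G = N \<cdot> N_G(A). Hence S = N_G(A) \<inter> \<pi>^-1(B) maps onto B, and since A is self-normalizing in N,
  S \<inter> N = A; thus S is an extension of A by B and solvable. Lifting the hi to gi in G, every
  element of G is an element of S^g1 \<cdots> S^gm times an element of N \<subseteq> S^n1 \<cdots> S^nk.
\<close>

lemma conjset_eq_image:
  assumes "group G" "A \<subseteq> carrier G" "g \<in> carrier G"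
  shows "conjset G A g = (\<lambda>a. g \<otimes>\<^bsub>G\<^esub> a \<otimes>\<^bsub>G\<^esub> inv\<^bsub>G\<^esub> g) ` A"
  unfolding conjset_def l_coset_def r_coset_def by auto

lemma conjset_carrier_update:
  assumes "group G" "subgroup N G" "g \<in> N"
  shows "conjset (G\<lparr>carrier := N\<rparr>) A g = conjset G A g"
  using assms unfolding conjset_def l_coset_def r_coset_def
  by (simp add: group.m_inv_consistent)

lemma conjset_closed:
  assumes "group G" "A \<subseteq> carrier G" "g \<in> carrier G"
  shows "conjset G A g \<subseteq> carrier G"
  using assms by (auto simp: conjset_eq_image group.inv_closed monoid.m_closed group.is_monoid)

lemma conjset_mono: "A \<subseteq> B \<Longrightarrow> conjset G A g \<subseteq> conjset G B g"
  unfolding conjset_def l_coset_def r_coset_def by blast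

lemma conjset_conjset:
  fixes G (structure)
  assumes "group G" "A \<subseteq> carrier G" "g \<in> carrier G" "h \<in> carrier G"
  shows "conjset G (conjset G A h) g = conjset G A (g \<otimes>\<^bsub>G\<^esub> h)"
proof -
  interpret group G by fact
  have closed: "conjset G A h \<subseteq> carrier G" using conjset_closed[OF assms(1,2,4)] .
  have "conjset G (conjset G A h) g = (\<lambda>b. g \<otimes> b \<otimes> inv g) ` conjset G A h"
    by (rule conjset_eq_image[OF assms(1) closed assms(3)])
  also have "\<dots> = (\<lambda>a. g \<otimes> (h \<otimes> a \<otimes> inv h) \<otimes> inv g) ` A"
    by (simp add: conjset_eq_image[OF assms(1,2,4)] image_image)
  also have "\<dots> = (\<lambda>a. g \<otimes> h \<otimes> a \<otimes> inv (g \<otimes> h)) ` A"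
    using assms by (intro image_cong) (auto simp: inv_mult_group m_assoc subsetD)
  also have "\<dots> = conjset G A (g \<otimes> h)"
    using assms by (simp add: conjset_eq_image)
  finally show ?thesis .
qed

lemma conjset_one:
  fixes G (structure)
  assumes "group G" "A \<subseteq> carrier G"
  shows "conjset G A \<one> = A"
proof -
  interpret group G by fact
  show ?thesis using assms(2) by (simp add: conjset_eq_image subset_iff)
qed

lemma normalizer_eq_conjset:
  assumes "A \<subseteq> carrier G"
  shows "normalizer G A = {g \<in> carrier G. conjset G A g = A}"
  using assms unfolding normalizer_def stabilizer_def conjset_def by auto

lemma subgroup_subset_normalizer:
  fixes G (structure)
  assumes "group G" "subgroup A G"
  shows "A \<subseteq> normalizer G A"
proof
  interpret group G by fact
  fix a assume a: "a \<in> A"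
  then have "a \<in> carrier G" "inv a \<in> A" using assms(2) by (auto simp: subgroup.mem_carrier subgroup.m_inv_closed)
  then have "conjset G A a = A"
    unfolding conjset_def using a assms(2) by (simp add: coset_join2 coset_join3)
  then show "a \<in> normalizer G A"
    using a assms(2) by (simp add: normalizer_eq_conjset subgroup.subset subgroup.mem_carrier)
qed

lemma normalizer_carrier_update:
  assumes "group G" "subgroup N G" "A \<subseteq> N"
  shows "normalizer (G\<lparr>carrier := N\<rparr>) A = normalizer G A \<inter> N"
proof -
  have "A \<subseteq> carrier G" using assms subgroup.subset by blast
  then show ?thesis
    using assms conjset_carrier_update[OF assms(1,2)]
    by (auto simp: normalizer_eq_conjset subgroup.mem_carrier)
qed

lemma conjugation_iso_normal:
  fixes G (structure)
  assumes "group G" "N \<lhd> G" "x \<in> carrier G"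
  shows "(\<lambda>y. x \<otimes>\<^bsub>G\<^esub> y \<otimes>\<^bsub>G\<^esub> inv\<^bsub>G\<^esub> x) \<in> iso (G\<lparr>carrier := N\<rparr>) (G\<lparr>carrier := N\<rparr>)"
proof -
  interpret group G by fact
  interpret normal N G by fact
  have hom: "(\<lambda>y. x \<otimes> y \<otimes> inv x) \<in> hom (G\<lparr>carrier := N\<rparr>) (G\<lparr>carrier := N\<rparr>)"
  proof (rule homI)
    fix a b assume "a \<in> carrier (G\<lparr>carrier := N\<rparr>)" "b \<in> carrier (G\<lparr>carrier := N\<rparr>)"
    then have "a \<in> carrier G" "b \<in> carrier G" using subset by auto
    then show "x \<otimes> (a \<otimes>\<^bsub>G\<lparr>carrier := N\<rparr>\<^esub> b) \<otimes> inv x =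
      (x \<otimes> a \<otimes> inv x) \<otimes>\<^bsub>G\<lparr>carrier := N\<rparr>\<^esub> (x \<otimes> b \<otimes> inv x)"
      using assms(3) by (simp add: m_assoc inv_solve_left)
  qed (use assms(3) inv_op_closed2 in simp)
  have "bij_betw (\<lambda>y. x \<otimes> y \<otimes> inv x) N N"
  proof (rule bij_betwI')
    fix a assume a: "a \<in> N"
    have "x \<otimes> (inv x \<otimes> a \<otimes> x) \<otimes> inv x = a"
      using a subset assms(3) by (simp add: m_assoc subsetD) (simp add: m_assoc[symmetric] subsetD)
    then show "\<exists>b\<in>N. a = x \<otimes> b \<otimes> inv x" using a assms(3) inv_op_closed1 by metis
  qed (use subset assms(3) inv_op_closed2 in auto)
  then show ?thesis using hom by (simp add: iso_def)
qed

lemma frattini_argument: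
  fixes G (structure)
  assumes "group G" "N \<lhd> G" "A \<subseteq> N"
    and conj_stable: "\<forall>\<alpha>\<in>iso (G\<lparr>carrier := N\<rparr>) (G\<lparr>carrier := N\<rparr>). \<exists>n\<in>N. \<alpha> ` A = conjset G A n"
    and "x \<in> carrier G"
  shows "\<exists>n\<in>N. \<exists>y\<in>normalizer G A. x = n \<otimes>\<^bsub>G\<^esub> y"
proof -
  interpret group G by fact
  interpret normal N G by fact
  have Ac: "A \<subseteq> carrier G" using assms(3) subset by blast
  obtain n where n: "n \<in> N" and conj_xn: "conjset G A x = conjset G A n"
    using conj_stable conjugation_iso_normal[OF assms(1,2,5)] assms(5)
    by (auto simp: conjset_eq_image[OF assms(1) Ac])
  have nc: "n \<in> carrier G" using n subset by blast
  have "conjset G A (inv n \<otimes> x) = conjset G (conjset G A x) (inv n)"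
    using nc assms(5) by (simp add: conjset_conjset[OF assms(1) Ac])
  also have "\<dots> = conjset G A (inv n \<otimes> n)"
    using nc by (simp add: conj_xn conjset_conjset[OF assms(1) Ac])
  finally have "inv n \<otimes> x \<in> normalizer G A"
    using nc assms(5) by (simp add: normalizer_eq_conjset[OF Ac] conjset_one[OF assms(1) Ac])
  moreover have "x = n \<otimes> (inv n \<otimes> x)" using nc assms(5) by (simp flip: m_assoc)
  ultimately show ?thesis using n by blast
qed

lemma setprod_list_Cons:
  "Us \<noteq> [] \<Longrightarrow> setprod_list G (U # Us) = U <#>\<^bsub>G\<^esub> setprod_list G Us"
  by (cases Us) simp_all

lemma setprod_list_closed:
  assumes "group G" "\<forall>U\<in>set Us. U \<subseteq> carrier G"
  shows "setprod_list G Us \<subseteq> carrier G"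
  using assms(2)
proof (induction Us rule: induct_list012)
  case 1
  then show ?case using assms(1) by (simp add: group.is_monoid monoid.one_closed)
next
  case (3 U U' Us)
  then show ?case
    using assms(1) unfolding setprod_list.simps set_mult_def
    by (auto intro!: monoid.m_closed[OF group.is_monoid] simp del: setprod_list.simps(3))
qed simp

lemma setprod_list_carrier_update:
  "setprod_list (G\<lparr>carrier := N\<rparr>) Us = setprod_list G Us"
  by (induction Us rule: induct_list012) (auto simp: set_mult_def)

lemma setprod_list_mono:
  "list_all2 (\<subseteq>) Us Vs \<Longrightarrow> setprod_list G Us \<subseteq> setprod_list G Vs"
proof (induction Us Vs rule: list_all2_induct)
  case (Cons U Us V Vs)
  have "Us = [] \<longleftrightarrow> Vs = []" using list_all2_lengthD[OF Cons.hyps(2)] by auto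
  then show ?case
    using Cons by (cases "Us = []") (auto simp: setprod_list_Cons set_mult_def)
qed simp

lemma setprod_list_append:
  assumes "group G" "\<forall>U\<in>set Us \<union> set Vs. U \<subseteq> carrier G" "Us \<noteq> []" "Vs \<noteq> []"
  shows "setprod_list G (Us @ Vs) = setprod_list G Us <#>\<^bsub>G\<^esub> setprod_list G Vs"
  using assms(2,3)
proof (induction Us rule: induct_list012)
  case (3 U U' Us)
  then show ?case
    using assms(1,4)
    by (simp add: setprod_list_Cons group.set_mult_assoc setprod_list_closed del: setprod_list.simps(3))
qed (simp_all add: setprod_list_Cons assms(4))

lemma hom_image_set_mult:
  assumes "group_hom G H h" "U \<subseteq> carrier G" "V \<subseteq> carrier G"
  shows "h ` (U <#>\<^bsub>G\<^esub> V) = h ` U <#>\<^bsub>H\<^esub> h ` V"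
proof -
  have "h (u \<otimes>\<^bsub>G\<^esub> v) = h u \<otimes>\<^bsub>H\<^esub> h v" if "u \<in> U" "v \<in> V" for u v
    using assms that by (simp add: group_hom.hom_mult subsetD)
  then show ?thesis
    unfolding set_mult_def image_UN image_insert image_empty SUP_image by (simp cong: SUP_cong)
qed

lemma hom_image_conjset:
  assumes "group_hom G H h" "A \<subseteq> carrier G" "g \<in> carrier G"
  shows "h ` conjset G A g = conjset H (h ` A) (h g)"
proof -
  interpret group_hom G H h by fact
  have "h ` A \<subseteq> carrier H" "h g \<in> carrier H" using assms(2,3) by auto
  then show ?thesis
    using assms(2,3) by (auto simp: conjset_eq_image image_image subsetD)
qed

lemma hom_image_setprod_list:
  assumes "group_hom G H h" "\<forall>U\<in>set Us. U \<subseteq> carrier G" "Us \<noteq> []"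
  shows "h ` setprod_list G Us = setprod_list H (map ((`) h) Us)"
  using assms(2,3)
proof (induction Us rule: induct_list012)
  case (3 U U' Us)
  have "setprod_list G (U' # Us) \<subseteq> carrier G"
    using 3 assms(1) by (intro setprod_list_closed) (auto simp: group_hom_def)
  then show ?case
    using 3 by (simp add: hom_image_set_mult[OF assms(1)] setprod_list_Cons del: setprod_list.simps(3))
qed simp_all

lemma group_hom_rcoset_Mod:
  assumes "N \<lhd> G"
  shows "group_hom G (G Mod N) (\<lambda>x. N #>\<^bsub>G\<^esub> x)"
proof -
  interpret normal N G by fact
  show ?thesis
    by (simp add: group_hom_def group_hom_axioms_def is_group r_coset_hom_Mod factorgroup_is_group)
qed

lemma subgroup_hom_vimage:
  assumes "group_hom G H h" "subgroup K H"
  shows "subgroup {x \<in> carrier G. h x \<in> K} G"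
proof -
  interpret group_hom G H h by fact
  show ?thesis
  proof (rule G.subgroupI)
    show "{x \<in> carrier G. h x \<in> K} \<noteq> {}"
      using subgroup.one_closed[OF assms(2)] by (auto intro!: exI[of _ "\<one>\<^bsub>G\<^esub>"])
  qed (auto simp: subgroup.m_closed[OF assms(2)] subgroup.m_inv_closed[OF assms(2)])
qed

lemma solvable_extension:
  fixes G (structure)
  assumes "group G" "N \<lhd> G" "subgroup S G"
    and "solvable (G\<lparr>carrier := S \<inter> N\<rparr>)"
    and "solvable ((G Mod N)\<lparr>carrier := (\<lambda>x. N #> x) ` S\<rparr>)"
  shows "solvable (G\<lparr>carrier := S\<rparr>)"
proof -
  interpret group G by fact
  have SN: "subgroup (S \<inter> N) G"
    using assms(2,3) by (simp add: normal_imp_subgroup subgroups_Inter_pair)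
  have incl: "group_hom (G\<lparr>carrier := S \<inter> N\<rparr>) (G\<lparr>carrier := S\<rparr>) id"
    using subgroup_imp_group[OF SN] subgroup_imp_group[OF assms(3)]
    by (auto simp: group_hom_def group_hom_axioms_def hom_def)
  have proj: "group_hom (G\<lparr>carrier := S\<rparr>) ((G Mod N)\<lparr>carrier := (\<lambda>x. N #> x) ` S\<rparr>) (\<lambda>x. N #> x)"
    using group_hom.induced_group_hom[OF group_hom_rcoset_Mod[OF assms(2)] assms(3)] .
  have "kernel (G\<lparr>carrier := S\<rparr>) ((G Mod N)\<lparr>carrier := (\<lambda>x. N #> x) ` S\<rparr>) (\<lambda>x. N #> x) \<subseteq> S \<inter> N"
    using rcos_self[OF _ normal_imp_subgroup[OF assms(2)]] subgroup.mem_carrier[OF assms(3)]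
    by (auto simp: kernel_def)
  then show ?thesis
    using solvable_condition[OF incl proj _ _ assms(4,5)] by simp
qed

lemma exists_subgroup_inter_image:
  fixes G (structure)
  assumes "group G" "N \<lhd> G" "subgroup A (G\<lparr>carrier := N\<rparr>)"
    and self_normalizing: "normalizer (G\<lparr>carrier := N\<rparr>) A = A"
    and conj_stable: "\<forall>\<alpha>\<in>iso (G\<lparr>carrier := N\<rparr>) (G\<lparr>carrier := N\<rparr>). \<exists>n\<in>N. \<alpha> ` A = conjset G A n"
    and "subgroup B (G Mod N)"
  shows "\<exists>S. subgroup S G \<and> A \<subseteq> S \<and> S \<inter> N = A \<and> (\<lambda>x. N #> x) ` S = B"
proof -
  interpret group G by fact
  interpret normal N G by fact
  have NG: "subgroup N G" by (rule subgroup_axioms)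
  have AN: "A \<subseteq> N" using subgroup.subset[OF assms(3)] by simp
  have AG: "subgroup A G" using incl_subgroup[OF NG assms(3)] .
  define H where "H = {x \<in> carrier G. N #> x \<in> B}"
  define S where "S = normalizer G A \<inter> H"
  have "subgroup H G"
    unfolding H_def using group_hom_rcoset_Mod[OF assms(2)] assms(6) by (rule subgroup_hom_vimage)
  then have "subgroup S G"
    unfolding S_def using AG by (simp add: normalizer_imp_subgroup subgroup.subset subgroups_Inter_pair)
  moreover have NH: "N \<subseteq> H"
    using subgroup.one_closed[OF assms(6)] subset by (auto simp: H_def coset_join2[OF _ NG])
  then have "A \<subseteq> S"
    unfolding S_def using AN subgroup_subset_normalizer[OF assms(1) AG] by blast
  moreover have "S \<inter> N = A"
    using NH self_normalizing normalizer_carrier_update[OF assms(1) NG AN] by (auto simp: S_def)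
  moreover have "(\<lambda>x. N #> x) ` S = B"
  proof
    show "(\<lambda>x. N #> x) ` S \<subseteq> B" by (auto simp: S_def H_def)
  next
    show "B \<subseteq> (\<lambda>x. N #> x) ` S"
    proof
      fix b assume b: "b \<in> B"
      then obtain x where x: "x \<in> carrier G" "b = N #> x"
        using subgroup.subset[OF assms(6)] by (auto simp: FactGroup_def RCOSETS_def)
      then obtain n y where ny: "n \<in> N" "y \<in> normalizer G A" "x = n \<otimes> y"
        using frattini_argument[OF assms(1,2) AN conj_stable] by blast
      have yc: "y \<in> carrier G" using ny(2) by (simp add: normalizer_def stabilizer_def)
      have "N #> x = N #> y"
        using ny subset yc by (simp add: coset_mult_assoc[symmetric] coset_join2[OF _ NG] subsetD)
      then show "b \<in> (\<lambda>x. N #> x) ` S"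
        using b x ny(2) yc by (auto simp: S_def H_def)
    qed
  qed
  ultimately show ?thesis by blast
qed

lemma FactGroup_lift_list:
  assumes "set hs \<subseteq> carrier (G Mod N)"
  obtains gs where "set gs \<subseteq> carrier G" "hs = map (\<lambda>x. N #>\<^bsub>G\<^esub> x) gs"
proof -
  have "\<forall>C\<in>set hs. \<exists>g\<in>carrier G. C = N #>\<^bsub>G\<^esub> g"
    using assms by (auto simp: FactGroup_def RCOSETS_def)
  then obtain rep where "\<And>C. C \<in> set hs \<Longrightarrow> rep C \<in> carrier G \<and> C = N #>\<^bsub>G\<^esub> rep C"
    by metis
  then show thesis
    by (intro that[of "map rep hs"]) (auto simp: map_idI)
qed

lemma carrier_subset_set_mult_normal:
  fixes G (structure)
  assumes "N \<lhd> G" "P \<subseteq> carrier G" "(\<lambda>x. N #> x) ` P = carrier (G Mod N)" "N \<subseteq> Q"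
  shows "carrier G \<subseteq> P <#> Q"
proof
  interpret normal N G by fact
  fix x assume x: "x \<in> carrier G"
  then have "N #> x \<in> (\<lambda>x. N #> x) ` P"
    using assms(3) subset by (simp add: FactGroup_def rcosetsI)
  then obtain y where y: "y \<in> P" "N #> x = N #> y" by auto
  then have "x \<in> y <# N"
    using assms(2) rcos_self[OF x subgroup_axioms] coset_eq by auto
  then show "x \<in> P <#> Q"
    using y(1) assms(4) by (auto simp: l_coset_def set_mult_def)
qed

lemma cp_fact_extension:
  fixes G (structure)
  assumes "group G" "N \<lhd> G" "subgroup S G" "A \<subseteq> S"
    and "cp_fact (G\<lparr>carrier := N\<rparr>) A k" "cp_fact (G Mod N) ((\<lambda>x. N #> x) ` S) m"
  shows "cp_fact G S (k + m)"
proof -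
  interpret group G by fact
  interpret normal N G by fact
  let ?\<pi> = "\<lambda>x. N #> x"
  have Sc: "S \<subseteq> carrier G" using assms(3) by (rule subgroup.subset)
  obtain ns where ns: "k \<ge> 1" "length ns = k" "set ns \<subseteq> N"
    "setprod_list G (map (conjset (G\<lparr>carrier := N\<rparr>) A) ns) = N"
    using assms(5) by (auto simp: cp_fact_def setprod_list_carrier_update)
  then have "setprod_list G (map (conjset G A) ns) = N"
    using conjset_carrier_update[OF is_group subgroup_axioms] by (simp add: subset_iff cong: map_cong)
  then have N_sub: "N \<subseteq> setprod_list G (map (conjset G S) ns)"
    using assms(4) by (auto intro!: setprod_list_mono simp: list_all2_map1 list_all2_map2
        list.rel_refl conjset_mono dest: subsetD)
  obtain hs where hs: "m \<ge> 1" "length hs = m" "set hs \<subseteq> carrier (G Mod N)"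
    "setprod_list (G Mod N) (map (conjset (G Mod N) (?\<pi> ` S)) hs) = carrier (G Mod N)"
    using assms(6) by (auto simp: cp_fact_def)
  obtain gs where gs: "set gs \<subseteq> carrier G" "hs = map ?\<pi> gs"
    using FactGroup_lift_list[OF hs(3)] .
  have gs_ne: "gs \<noteq> []" using gs(2) hs(1,2) by auto
  have "conjset G S g \<subseteq> carrier G" if "g \<in> carrier G" for g
    using conjset_closed[OF is_group Sc that] .
  then have closed: "\<forall>U\<in>set (map (conjset G S) (gs @ ns)). U \<subseteq> carrier G"
    using gs(1) ns(3) subset by auto
  let ?P = "setprod_list G (map (conjset G S) gs)" and ?Q = "setprod_list G (map (conjset G S) ns)"
  have hom: "group_hom G (G Mod N) ?\<pi>" using group_hom_rcoset_Mod[OF assms(2)] .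
  have "?\<pi> ` ?P = setprod_list (G Mod N) (map ((`) ?\<pi>) (map (conjset G S) gs))"
    by (rule hom_image_setprod_list[OF hom]) (use closed gs_ne in auto)
  also have "map ((`) ?\<pi>) (map (conjset G S) gs) = map (conjset (G Mod N) (?\<pi> ` S)) hs"
    unfolding gs(2) map_map
    by (rule map_cong[OF refl]) (use gs(1) in \<open>simp add: hom_image_conjset[OF hom Sc] subsetD\<close>)
  finally have image_P: "?\<pi> ` ?P = carrier (G Mod N)" using hs(4) by simp
  have "carrier G \<subseteq> ?P <#> ?Q"
    using carrier_subset_set_mult_normal[OF assms(2) _ image_P N_sub]
      setprod_list_closed[OF is_group, of "map (conjset G S) gs"] closed by auto
  moreover have "?P <#> ?Q = setprod_list G (map (conjset G S) (gs @ ns))"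
    using setprod_list_append[OF is_group closed[unfolded map_append set_append]] gs_ne ns(1,2)
    by force
  ultimately have "setprod_list G (map (conjset G S) (gs @ ns)) = carrier G"
    using setprod_list_closed[OF is_group closed] by blast
  then show ?thesis
    unfolding cp_fact_def using ns(1-3) hs(2) gs(1,2) subset
    by (intro conjI exI[of _ "gs @ ns"]) auto
qed

lemma Inf_enat_mem: "Inf Z \<noteq> (\<infinity>::enat) \<Longrightarrow> Inf Z \<in> Z"
  by (cases "Z = {}") (auto simp: top_enat_def intro: wellorder_InfI)

lemma gamma_cp_attained:
  assumes "gamma_cp G A \<noteq> \<infinity>"
  obtains k where "cp_fact G A k" "gamma_cp G A = enat k"
  using Inf_enat_mem[OF assms[unfolded gamma_cp_def]] unfolding gamma_cp_def by blast

lemma gamma_ss_attained: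
  assumes "gamma_ss G \<noteq> \<infinity>"
  obtains A k where "special_sub G A" "cp_fact G A k" "gamma_ss G = enat k"
proof -
  obtain A where "special_sub G A" "gamma_ss G = gamma_cp G A"
    using Inf_enat_mem[OF assms[unfolded gamma_ss_def]] unfolding gamma_ss_def by blast
  with assms that show ?thesis by (metis gamma_cp_attained)
qed

lemma gamma_s_attained:
  assumes "gamma_s G \<noteq> \<infinity>"
  obtains B m where "subgroup B G" "solvable (G\<lparr>carrier := B\<rparr>)" "cp_fact G B m" "gamma_s G = enat m"
proof -
  obtain B where "subgroup B G" "solvable (G\<lparr>carrier := B\<rparr>)" "gamma_s G = gamma_cp G B"
    using Inf_enat_mem[OF assms[unfolded gamma_s_def]] unfolding gamma_s_def by blast
  with assms that show ?thesis by (metis gamma_cp_attained)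
qed

lemma gamma_s_le:
  assumes "subgroup S G" "solvable (G\<lparr>carrier := S\<rparr>)" "cp_fact G S k"
  shows "gamma_s G \<le> enat k"
proof -
  have "gamma_s G \<le> gamma_cp G S" unfolding gamma_s_def using assms(1,2) by (blast intro: Inf_lower)
  also have "\<dots> \<le> enat k" unfolding gamma_cp_def using assms(3) by (blast intro: Inf_lower)
  finally show ?thesis .
qed

theorem lemma14:
  fixes G :: "('a, 'b) monoid_scheme" and N :: "'a set"
  assumes "group G" and "finite (carrier G)" and "N \<lhd> G"
  shows "gamma_s G \<le> gamma_ss (G\<lparr>carrier := N\<rparr>) + gamma_s (G Mod N)"
proof (cases "gamma_ss (G\<lparr>carrier := N\<rparr>) = \<infinity> \<or> gamma_s (G Mod N) = \<infinity>")
  case False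
  then obtain A k B m where A: "special_sub (G\<lparr>carrier := N\<rparr>) A" "cp_fact (G\<lparr>carrier := N\<rparr>) A k"
      and B: "subgroup B (G Mod N)" "solvable ((G Mod N)\<lparr>carrier := B\<rparr>)" "cp_fact (G Mod N) B m"
      and sum: "gamma_ss (G\<lparr>carrier := N\<rparr>) + gamma_s (G Mod N) = enat (k + m)"
    by (metis gamma_ss_attained gamma_s_attained plus_enat_simps(1))
  have NG: "subgroup N G" using assms(3) by (rule normal_imp_subgroup)
  have A_sub: "subgroup A (G\<lparr>carrier := N\<rparr>)" and A_solv: "solvable (G\<lparr>carrier := A\<rparr>)"
    and A_norm: "normalizer (G\<lparr>carrier := N\<rparr>) A = A"
    and A_stable: "\<forall>\<alpha>\<in>iso (G\<lparr>carrier := N\<rparr>) (G\<lparr>carrier := N\<rparr>). \<exists>n\<in>N. \<alpha> ` A = conjset G A n"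
    using A(1) conjset_carrier_update[OF assms(1) NG] by (simp_all add: special_sub_def)
  obtain S where S: "subgroup S G" "A \<subseteq> S" "S \<inter> N = A" "(\<lambda>x. N #>\<^bsub>G\<^esub> x) ` S = B"
    using exists_subgroup_inter_image[OF assms(1,3) A_sub A_norm A_stable B(1)] by blast
  have "solvable (G\<lparr>carrier := S\<rparr>)"
    using solvable_extension[OF assms(1,3) S(1)] A_solv B(2) S(3,4) by simp
  moreover have "cp_fact G S (k + m)"
    using cp_fact_extension[OF assms(1,3) S(1,2) A(2)] B(3) S(4) by simp
  ultimately show ?thesis using gamma_s_le S(1) sum by metis
qed auto

end
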